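(* If $G$ is a 3-symmetric graph on $n\ge 3$ vertices, then $n\equiv 0,1,$ or $8 \pmod{16}$. In particular no 3-symmetric graph has $n$ vertices for $3\le n\le 7$.
   Context: All graphs are finite and simple. For a graph $G$ on $n$ vertices and a graph $H$ on $k$ vertices, the density $t(H,G)$ is the number of $k$-element subsets $S\subseteq V(G)$ whose induced subgraph $G[S]$ is isomorphic to $H$, divided by $\binom{n}{k}$. A graph $G$ with $n\ge 3$ vertices is 3-symmetric if $t(K_3,G)=1/8$, $t(P_3,G)=3/8$, $t(K_2\cup K_1,G)=3/8$ and $t(\overline{K_3},G)=1/8$, where $K_3$ is the triangle, $P_3$ is the path with 3 vertices and 2 edges, $K_2\cup K_1$ is the 3-vertex graph with exactly one edge, and $\overline{K_3}$ is the 3-vertex graph with no edges. *)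

theory Defs
  imports Complex_Main
begin

definition simple_graph :: "'a set \<Rightarrow> ('a \<Rightarrow> 'a \<Rightarrow> bool) \<Rightarrow> bool" where
  "simple_graph V E \<longleftrightarrow> finite V \<and> (\<forall>x\<in>V. \<forall>y\<in>V. E x y \<longrightarrow> E y x) \<and> (\<forall>x\<in>V. \<not> E x x)"

definition induced_iso :: "('a \<Rightarrow> 'a \<Rightarrow> bool) \<Rightarrow> 'a set \<Rightarrow> 'b set \<Rightarrow> ('b \<Rightarrow> 'b \<Rightarrow> bool) \<Rightarrow> bool" where
  "induced_iso E S W F \<longleftrightarrow>
     (\<exists>f. bij_betw f S W \<and> (\<forall>x\<in>S. \<forall>y\<in>S. E x y \<longleftrightarrow> F (f x) (f y)))"

definition density :: "'b set \<Rightarrow> ('b \<Rightarrow> 'b \<Rightarrow> bool) \<Rightarrow> 'a set \<Rightarrow> ('a \<Rightarrow> 'a \<Rightarrow> bool) \<Rightarrow> real" where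
  "density W F V E =
     real (card {S. S \<subseteq> V \<and> card S = card W \<and> induced_iso E S W F})
     / real (card V choose card W)"

definition V3 :: "nat set" where "V3 = {0, 1, 2}"

definition K3_edges :: "nat \<Rightarrow> nat \<Rightarrow> bool" where
  "K3_edges x y \<longleftrightarrow> x \<noteq> y"

definition P3_edges :: "nat \<Rightarrow> nat \<Rightarrow> bool" where
  "P3_edges x y \<longleftrightarrow> {x, y} = {0, 1} \<or> {x, y} = {1, 2}"

definition K2K1_edges :: "nat \<Rightarrow> nat \<Rightarrow> bool" where
  "K2K1_edges x y \<longleftrightarrow> {x, y} = {0, 1} \<and> x \<noteq> y"

definition empty_edges :: "nat \<Rightarrow> nat \<Rightarrow> bool" where
  "empty_edges x y \<longleftrightarrow> False"

definition three_symmetric :: "'a set \<Rightarrow> ('a \<Rightarrow> 'a \<Rightarrow> bool) \<Rightarrow> bool" where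
  "three_symmetric V E \<longleftrightarrow> card V \<ge> 3 \<and>
     density V3 K3_edges V E = 1/8 \<and>
     density V3 P3_edges V E = 3/8 \<and>
     density V3 K2K1_edges V E = 3/8 \<and>
     density V3 empty_edges V E = 1/8"

end

theory Submission
  imports Defs
begin

text \<open>The four prescribed densities add up to 1 and the four graphs have 3, 2, 1, 0 edges, so
  every 3-subset of a 3-symmetric graph induces one of them and a triple spans 3/2 edges on
  average. Each edge lies in \<open>n - 2\<close> triples, hence \<open>e (n - 2) = 3/2 \<cdot> C(n,3)\<close>, i.e.
  \<open>e = n (n - 1) / 4\<close>. Integrality of \<open>e\<close> and of the triangle count \<open>C(n,3) / 8\<close>
  gives \<open>4 | n (n - 1)\<close> and \<open>8 | C(n,3)\<close>, which together force \<open>n \<equiv> 0, 1, 8 (mod 16)\<close>.\<close>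

lemma six_mult_choose_three: "6 * (n choose 3) = n * (n - 1) * (n - 2)"
proof (cases "n \<ge> 3")
  case True
  define m where "m = n - 3"
  have n: "n = Suc (Suc (Suc m))"
    using True by (simp add: m_def)
  have "fact m * (6 * (n choose 3)) = fact 3 * fact m * (n choose 3)"
    by (simp add: fact_numeral)
  also have "\<dots> = fact n"
    unfolding m_def by (rule binomial_fact_lemma[OF True])
  also have "\<dots> = fact m * (n * (n - 1) * (n - 2))"
    unfolding n by (simp only: fact_Suc) (simp add: algebra_simps)
  finally show ?thesis by simp
next
  case False
  then have "n = 0 \<or> n = 1 \<or> n = 2" by auto
  then show ?thesis by auto
qed

lemma mod_16_in_0_1_8_if_dvd:
  fixes n :: nat
  assumes "4 dvd n * (n - 1)" and "8 dvd n choose 3"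
  shows "n mod 16 \<in> {0, 1, 8}"
proof (cases "n \<ge> 2")
  case True
  then obtain m where n: "n = m + 2" by (metis le_add_diff_inverse2)
  define r where "r = m mod 16"
  have shift16: "(m + j) mod 16 = (r + j) mod 16" for j
    by (simp add: r_def mod_add_left_eq)
  have shift4: "(m + j) mod 4 = (r + j) mod 4" for j
  proof -
    have "(m + j) mod 4 = (m + j) mod 16 mod 4" by (simp add: mod_mod_cancel)
    also have "\<dots> = (r + j) mod 16 mod 4" by (simp add: shift16)
    also have "\<dots> = (r + j) mod 4" by (simp add: mod_mod_cancel)
    finally show ?thesis .
  qed
  obtain c where "n choose 3 = 8 * c" using assms(2) by blast
  then have "(m + 2) * (m + 1) * (m + 0) = 16 * (3 * c)"
    using six_mult_choose_three[of n] n by simp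
  moreover have "((m + 2) * (m + 1) * (m + 0)) mod 16 = ((r + 2) * (r + 1) * (r + 0)) mod 16"
    by (intro mod_mult_cong shift16)
  ultimately have "((r + 2) * (r + 1) * r) mod 16 = 0" by simp
  moreover have "((r + 2) * (r + 1)) mod 4 = 0"
  proof -
    have "((m + 2) * (m + 1)) mod 4 = ((r + 2) * (r + 1)) mod 4"
      by (intro mod_mult_cong shift4)
    then show ?thesis using assms(1) n by (simp add: dvd_eq_mod_eq_0)
  qed
  moreover have "r = 0 \<or> r = 1 \<or> r = 2 \<or> r = 3 \<or> r = 4 \<or> r = 5 \<or> r = 6 \<or> r = 7 \<or> r = 8
    \<or> r = 9 \<or> r = 10 \<or> r = 11 \<or> r = 12 \<or> r = 13 \<or> r = 14 \<or> r = 15"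
    using mod_less_divisor[of 16 m] unfolding r_def[symmetric] by presburger
  ultimately have "(r + 2) mod 16 \<in> {0, 1, 8}"
    by (elim disjE) simp_all
  then show ?thesis using n shift16[of 2] by simp
next
  case False
  then have "n = 0 \<or> n = 1" by linarith
  then show ?thesis by auto
qed

definition arcs :: "('a \<Rightarrow> 'a \<Rightarrow> bool) \<Rightarrow> 'a set \<Rightarrow> ('a \<times> 'a) set" where
  "arcs E S = {p \<in> S \<times> S. case_prod E p}"

definition induced_copies :: "'a set \<Rightarrow> ('a \<Rightarrow> 'a \<Rightarrow> bool) \<Rightarrow> 'b set \<Rightarrow> ('b \<Rightarrow> 'b \<Rightarrow> bool) \<Rightarrow> 'a set set" where
  "induced_copies V E W F = {S. S \<subseteq> V \<and> card S = card W \<and> induced_iso E S W F}"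

lemma density_eq_card_induced_copies:
  "density W F V E = real (card (induced_copies V E W F)) / real (card V choose card W)"
  by (simp add: density_def induced_copies_def)

lemma finite_arcs: "finite S \<Longrightarrow> finite (arcs E S)"
  by (simp add: arcs_def)

lemma card_arcs_eq_if_induced_iso:
  assumes "induced_iso E S W F"
  shows "card (arcs E S) = card (arcs F W)"
proof -
  obtain f where f: "bij_betw f S W" and adj: "\<forall>x\<in>S. \<forall>y\<in>S. E x y \<longleftrightarrow> F (f x) (f y)"
    using assms unfolding induced_iso_def by blast
  have "bij_betw (map_prod f f) (S \<times> S) (W \<times> W)"
    using f f by (rule bij_betw_map_prod)
  moreover have "arcs E S \<subseteq> S \<times> S"
    by (auto simp: arcs_def)
  ultimately have "bij_betw (map_prod f f) (arcs E S) (map_prod f f ` arcs E S)"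
    by (meson bij_betw_imp_inj_on bij_betw_imageI inj_on_subset)
  moreover have "map_prod f f ` arcs E S = arcs F W"
  proof
    show "map_prod f f ` arcs E S \<subseteq> arcs F W"
      using f adj by (auto simp: arcs_def bij_betw_def)
    show "arcs F W \<subseteq> map_prod f f ` arcs E S"
    proof
      fix q assume "q \<in> arcs F W"
      then obtain a b where q: "q = (a, b)" "a \<in> W" "b \<in> W" "F a b"
        by (auto simp: arcs_def)
      obtain x y where "x \<in> S" "y \<in> S" "a = f x" "b = f y"
        using f q by (metis bij_betw_imp_surj_on imageE)
      with q adj show "q \<in> map_prod f f ` arcs E S"
        by (force simp: arcs_def)
    qed
  qed
  ultimately show ?thesis by (simp add: bij_betw_same_card)
qed

lemma induced_copies_disjoint:
  assumes "card (arcs F W) \<noteq> card (arcs F' W)"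
  shows "induced_copies V E W F \<inter> induced_copies V E W F' = {}"
proof -
  have "card (arcs F W) = card (arcs F' W)"
    if "induced_iso E S W F" "induced_iso E S W F'" for S
    using that by (metis card_arcs_eq_if_induced_iso)
  then show ?thesis
    using assms unfolding induced_copies_def by blast
qed

lemma card_V3 [simp]: "card V3 = 3"
  by (simp add: V3_def)

lemma card_arcs_K3: "card (arcs K3_edges V3) = 6"
proof -
  have "arcs K3_edges V3 = {(0,1), (0,2), (1,0), (1,2), (2,0), (2,1)}"
    by (auto simp: arcs_def V3_def K3_edges_def)
  then show ?thesis by simp
qed

lemma card_arcs_P3: "card (arcs P3_edges V3) = 4"
proof -
  have "arcs P3_edges V3 = {(0,1), (1,0), (1,2), (2,1)}"
    by (auto simp: arcs_def V3_def P3_edges_def doubleton_eq_iff)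
  then show ?thesis by simp
qed

lemma card_arcs_K2K1: "card (arcs K2K1_edges V3) = 2"
proof -
  have "arcs K2K1_edges V3 = {(0,1), (1,0)}"
    by (auto simp: arcs_def V3_def K2K1_edges_def doubleton_eq_iff)
  then show ?thesis by simp
qed

lemma card_arcs_empty: "card (arcs empty_edges V3) = 0"
proof -
  have "arcs empty_edges V3 = {}"
    by (auto simp: arcs_def empty_edges_def)
  then show ?thesis by simp
qed

lemma even_card_arcs:
  assumes "simple_graph V E"
  shows "even (card (arcs E V))"
proof -
  define C where "C = (\<lambda>p. {p, prod.swap p}) ` arcs E V"
  have fin: "finite (arcs E V)"
    using assms by (simp add: simple_graph_def finite_arcs)
  have cover: "\<Union>C = arcs E V"
    using assms by (auto simp: C_def arcs_def simple_graph_def)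
  have "2 * card C = card (\<Union>C)"
  proof (rule card_partition)
    show "finite C" "finite (\<Union>C)"
      using fin cover by (simp_all add: C_def)
    show "card c = 2" if "c \<in> C" for c
    proof -
      obtain x y where "c = {(x, y), (y, x)}" "x \<in> V" "E x y"
        using \<open>c \<in> C\<close> by (auto simp: C_def arcs_def)
      moreover have "x \<noteq> y"
        using assms \<open>x \<in> V\<close> \<open>E x y\<close> by (auto simp: simple_graph_def)
      ultimately show "card c = 2" by simp
    qed
    show "c1 \<inter> c2 = {}" if "c1 \<in> C" "c2 \<in> C" "c1 \<noteq> c2" for c1 c2
      using that by (auto simp: C_def)
  qed
  then show ?thesis by (metis cover dvd_triv_left)
qed

lemma card_3_subsets_containing_pair:
  assumes "finite V" "x \<in> V" "y \<in> V" "x \<noteq> y"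
  shows "card {S. S \<subseteq> V \<and> card S = 3 \<and> x \<in> S \<and> y \<in> S} = card V - 2"
proof -
  have "{S. S \<subseteq> V \<and> card S = 3 \<and> x \<in> S \<and> y \<in> S} = (\<lambda>z. {x, y, z}) ` (V - {x, y})"
  proof
    show "{S. S \<subseteq> V \<and> card S = 3 \<and> x \<in> S \<and> y \<in> S} \<subseteq> (\<lambda>z. {x, y, z}) ` (V - {x, y})"
    proof
      fix S assume S: "S \<in> {S. S \<subseteq> V \<and> card S = 3 \<and> x \<in> S \<and> y \<in> S}"
      then have "card (S - {x, y}) = 1"
        using assms finite_subset[of S V] by (auto simp: card_Diff_subset)
      then obtain z where z: "S - {x, y} = {z}"
        by (auto simp: card_1_singleton_iff)
      then have "S = {x, y, z}" "z \<in> V - {x, y}"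
        using S by auto
      then show "S \<in> (\<lambda>z. {x, y, z}) ` (V - {x, y})" by blast
    qed
    show "(\<lambda>z. {x, y, z}) ` (V - {x, y}) \<subseteq> {S. S \<subseteq> V \<and> card S = 3 \<and> x \<in> S \<and> y \<in> S}"
      using assms by auto
  qed
  moreover have "inj_on (\<lambda>z. {x, y, z}) (V - {x, y})"
    by (auto simp: inj_on_def)
  ultimately show ?thesis
    using assms by (simp add: card_image card_Diff_subset)
qed

lemma sum_card_arcs_3_subsets:
  assumes "simple_graph V E"
  shows "(\<Sum>S | S \<subseteq> V \<and> card S = 3. card (arcs E S)) = card (arcs E V) * (card V - 2)"
proof -
  define T where "T = {S. S \<subseteq> V \<and> card S = 3}"
  have fin: "finite V" "finite (arcs E V)" "finite T"
    using assms by (simp_all add: simple_graph_def finite_arcs T_def)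
  have "(\<Sum>S\<in>T. card (arcs E S)) = (\<Sum>S\<in>T. \<Sum>p\<in>arcs E V. if p \<in> S \<times> S then 1 else 0)"
  proof (rule sum.cong[OF refl])
    fix S assume "S \<in> T"
    then have "arcs E S = {p \<in> arcs E V. p \<in> S \<times> S}"
      by (auto simp: T_def arcs_def)
    then show "card (arcs E S) = (\<Sum>p\<in>arcs E V. if p \<in> S \<times> S then 1 else 0)"
      using fin by (simp add: sum.inter_filter[symmetric])
  qed
  also have "\<dots> = (\<Sum>p\<in>arcs E V. \<Sum>S\<in>T. if p \<in> S \<times> S then 1 else 0)"
    by (rule sum.swap)
  also have "\<dots> = (\<Sum>p\<in>arcs E V. card V - 2)"
  proof (rule sum.cong[OF refl])
    fix p assume "p \<in> arcs E V"
    then obtain x y where p: "p = (x, y)" "x \<in> V" "y \<in> V" "E x y"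
      by (auto simp: arcs_def)
    then have "x \<noteq> y"
      using assms by (auto simp: simple_graph_def)
    then have "card {S \<in> T. p \<in> S \<times> S} = card V - 2"
      using card_3_subsets_containing_pair[OF fin(1) p(2,3)] by (simp add: T_def p(1) conj_assoc)
    then show "(\<Sum>S\<in>T. if p \<in> S \<times> S then 1 else 0) = card V - 2"
      using fin by (simp add: sum.inter_filter[symmetric])
  qed
  finally show ?thesis by (simp add: T_def)
qed

lemma card_induced_copies_if_density:
  assumes "density W F V E = real k / real c" and "c > 0" and "card W \<le> card V"
  shows "c * card (induced_copies V E W F) = k * (card V choose card W)"
proof -
  have "real (card V choose card W) > 0"
    using assms(3) by simp
  then have "real c * real (card (induced_copies V E W F)) = real k * real (card V choose card W)"
    using assms(1,2) by (simp add: density_eq_card_induced_copies field_simps)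
  then show ?thesis by (simp flip: of_nat_mult)
qed

lemma three_symmetric_card_induced_copies:
  assumes "three_symmetric V E"
  shows "8 * card (induced_copies V E V3 K3_edges) = card V choose 3"
    and "8 * card (induced_copies V E V3 P3_edges) = 3 * (card V choose 3)"
    and "8 * card (induced_copies V E V3 K2K1_edges) = 3 * (card V choose 3)"
    and "8 * card (induced_copies V E V3 empty_edges) = card V choose 3"
  using assms card_induced_copies_if_density[of V3 _ V E 1 8] card_induced_copies_if_density[of V3 _ V E 3 8]
  by (simp_all add: three_symmetric_def)

lemma three_symmetric_sum_card_arcs:
  assumes "simple_graph V E" and "three_symmetric V E"
  shows "(\<Sum>S | S \<subseteq> V \<and> card S = 3. card (arcs E S)) = 3 * (card V choose 3)"
proof -
  define T where "T = {S. S \<subseteq> V \<and> card S = 3}"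
  define I where "I F = induced_copies V E V3 F" for F
  define U where "U = I K3_edges \<union> I P3_edges \<union> I K2K1_edges \<union> I empty_edges"
  have "finite V"
    using assms(1) by (simp add: simple_graph_def)
  have fin: "finite T" "finite (I F)" for F
    using \<open>finite V\<close> by (auto simp: T_def I_def induced_copies_def intro: finite_subset[of _ "Pow V"])
  have disj: "I K3_edges \<inter> I P3_edges = {}"
    "(I K3_edges \<union> I P3_edges) \<inter> I K2K1_edges = {}"
    "(I K3_edges \<union> I P3_edges \<union> I K2K1_edges) \<inter> I empty_edges = {}"
    unfolding I_def Int_Un_distrib2
    by (simp_all add: induced_copies_disjoint card_arcs_K3 card_arcs_P3 card_arcs_K2K1 card_arcs_empty)
  txt \<open>The four families are disjoint and their sizes add up to the number of triples.\<close>
  have "U \<subseteq> T"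
    by (auto simp: U_def T_def I_def induced_copies_def)
  moreover have "card U = card T"
  proof -
    have "card T = card V choose 3"
      using \<open>finite V\<close> by (simp add: T_def n_subsets)
    moreover have "card U = card (I K3_edges) + card (I P3_edges) + card (I K2K1_edges) + card (I empty_edges)"
      using fin disj by (simp add: U_def card_Un_disjoint)
    ultimately show ?thesis
      using three_symmetric_card_induced_copies[OF assms(2)] by (simp add: I_def)
  qed
  ultimately have "U = T"
    using fin by (simp add: card_subset_eq)
  have sum_I: "(\<Sum>S\<in>I F. card (arcs E S)) = card (I F) * card (arcs F V3)" for F
  proof -
    have "(\<Sum>S\<in>I F. card (arcs E S)) = (\<Sum>S\<in>I F. card (arcs F V3))"
      by (rule sum.cong) (auto simp: I_def induced_copies_def card_arcs_eq_if_induced_iso)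
    then show ?thesis by simp
  qed
  have "(\<Sum>S\<in>T. card (arcs E S)) = (\<Sum>S\<in>U. card (arcs E S))"
    using \<open>U = T\<close> by simp
  also have "\<dots> = 6 * card (I K3_edges) + 4 * card (I P3_edges) + 2 * card (I K2K1_edges)"
    using fin disj
    by (simp add: U_def sum.union_disjoint sum_I card_arcs_K3 card_arcs_P3 card_arcs_K2K1 card_arcs_empty)
  also have "\<dots> = 3 * (card V choose 3)"
    using three_symmetric_card_induced_copies[OF assms(2)] by (simp add: I_def)
  finally show ?thesis by (simp add: T_def)
qed

lemma three_symmetric_card_arcs:
  assumes "simple_graph V E" and "three_symmetric V E"
  shows "2 * card (arcs E V) = card V * (card V - 1)"
proof -
  have "card (arcs E V) * (card V - 2) = 3 * (card V choose 3)"
    using sum_card_arcs_3_subsets[OF assms(1)] three_symmetric_sum_card_arcs[OF assms] by simp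
  then have "(2 * card (arcs E V)) * (card V - 2) = 6 * (card V choose 3)"
    by simp
  also have "\<dots> = (card V * (card V - 1)) * (card V - 2)"
    by (rule six_mult_choose_three)
  finally have "(2 * card (arcs E V)) * (card V - 2) = (card V * (card V - 1)) * (card V - 2)" .
  moreover have "card V - 2 > 0"
    using assms(2) by (simp add: three_symmetric_def)
  ultimately show ?thesis by simp
qed

theorem mainTheorem6:
  fixes V :: "'a set" and E :: "'a \<Rightarrow> 'a \<Rightarrow> bool"
  assumes "simple_graph V E" and "card V \<ge> 3" and "three_symmetric V E"
  shows "card V mod 16 \<in> {0, 1, 8} \<and> \<not> (3 \<le> card V \<and> card V \<le> 7)"
proof -
  have "8 dvd card V choose 3"
    using three_symmetric_card_induced_copies(1)[OF assms(3)] by (metis dvd_triv_left)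
  moreover have "4 dvd card V * (card V - 1)"
  proof -
    obtain e where "card (arcs E V) = 2 * e"
      using even_card_arcs[OF assms(1)] by blast
    then have "card V * (card V - 1) = 4 * e"
      using three_symmetric_card_arcs[OF assms(1,3)] by simp
    then show ?thesis by simp
  qed
  ultimately have "card V mod 16 \<in> {0, 1, 8}"
    by (rule mod_16_in_0_1_8_if_dvd[rotated])
  moreover have "\<not> (3 \<le> card V \<and> card V \<le> 7)"
  proof -
    have "card V mod 16 = 0 \<or> card V mod 16 = 1 \<or> card V mod 16 = 8"
      using \<open>card V mod 16 \<in> {0, 1, 8}\<close> by simp
    then show ?thesis by presburger
  qed
  ultimately show ?thesis by blast
qed

end
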